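(* Let $K$ be the finite field of characteristic $p$ and order $q$, and let $d$ be an integer with $\gcd(d,q-1)=1$. Suppose that $\{W_{K,d}(a): a\in K^\times\}=\{0,A,-A\}$ is a set of exactly three values. Then $d\equiv 1\pmod{p-1}$ and $|A|=p^k$ for some positive integer $k$. Moreover, if $R$ denotes the set of roots in $K$ of the polynomial $(x+1)^d-x^d-1$, then $\sqrt{q}<\sqrt{|R|\,q}=|A|<q$.
   Context: $\psi_K(x)=\exp(2\pi i\,\mathrm{Tr}_{K/\mathbb{F}_p}(x)/p)$ is the canonical additive character of $K$, and for $a\in K$ the Weil sum is $W_{K,d}(a)=\sum_{x\in K}\psi_K(x^d+ax)$. *)

theory Defs
  imports "HOL-Analysis.Analysis" "HOL-Number_Theory.Cong"
begin

text \<open>K is modelled as a finite field type 'a; p = CHAR('a), q = CARD('a) = p^n.\<close>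

definition field_ext_degree :: "'a::{finite,field} itself \<Rightarrow> nat" where
  "field_ext_degree T = (THE n. CHAR('a) ^ n = CARD('a))"

definition abs_trace :: "'a::{finite,field} \<Rightarrow> 'a" where
  "abs_trace x = (\<Sum>i < field_ext_degree TYPE('a). x ^ (CHAR('a) ^ i))"

definition trace_nat :: "'a::{finite,field} \<Rightarrow> nat" where
  "trace_nat x = (THE m. m < CHAR('a) \<and> of_nat m = abs_trace x)"

definition add_char :: "'a::{finite,field} \<Rightarrow> complex" where
  "add_char x = exp (2 * pi * \<i> * of_nat (trace_nat x) / of_nat CHAR('a))"

definition weil_sum :: "nat \<Rightarrow> 'a::{finite,field} \<Rightarrow> complex" where
  "weil_sum d a = (\<Sum>x\<in>(UNIV::'a set). add_char (x ^ d + a * x))"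

end

theory Submission
  imports Defs "HOL-Computational_Algebra.Polynomial_Factorial"
    "HOL-Number_Theory.Residue_Primitive_Roots"
begin

text \<open>
  Write \<open>W(a) = W\<^sub>K\<^sub>,\<^sub>d(a)\<close>, \<open>q = p\<^sup>n\<close>, and let \<open>N\<^sub>+\<close>, \<open>N\<^sub>-\<close> be the numbers of \<open>a \<noteq> 0\<close>
  with \<open>W(a) = A\<close> resp. \<open>-A\<close>. Orthogonality of the additive character gives the power moments
  \<open>\<Sum>\<^sub>a W(a) = q\<close>, \<open>\<Sum>\<^sub>a |W(a)|\<^sup>2 = q\<^sup>2\<close> and \<open>\<Sum>\<^sub>a W(a)\<^sup>3 = q\<^sup>2 |R|\<close>; the last one because
  \<open>(x + y)\<^sup>d - x\<^sup>d - y\<^sup>d\<close> vanishes exactly on the lines \<open>y = t x\<close> with \<open>t \<in> R\<close> and on \<open>x = 0\<close>.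
  Hence \<open>(N\<^sub>+ - N\<^sub>-) A = q\<close>, \<open>(N\<^sub>+ + N\<^sub>-) |A|\<^sup>2 = q\<^sup>2\<close>, \<open>(N\<^sub>+ - N\<^sub>-) A\<^sup>3 = q\<^sup>2 |R|\<close>, so \<open>A\<close> is
  rational with \<open>A\<^sup>2 = q |R|\<close> and \<open>(N\<^sub>+ - N\<^sub>-)\<^sup>2 |R| = q\<close>; this forces \<open>|A| = p\<^sup>k\<close> and
  \<open>\<surd>q < |A| < q\<close>.

  Being rational, every \<open>W(a)\<close> is fixed by the Galois automorphisms \<open>\<zeta>\<^sub>p \<mapsto> \<zeta>\<^sub>p\<^sup>j\<close>, which map
  \<open>W(a)\<close> to \<open>\<Sum>\<^sub>x \<psi>(j (x\<^sup>d + a x))\<close>. The twisted second moment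
  \<open>\<Sum>\<^sub>a W(a) \<Sum>\<^sub>x \<psi>(c (x\<^sup>d + a x))\<^sup>* = q\<^sup>2 [c\<^sup>d = c]\<close> then yields \<open>j\<^sup>d \<equiv> j (mod p)\<close> for all \<open>j\<close>
  prime to \<open>p\<close>, i.e. \<open>d \<equiv> 1 (mod p - 1)\<close>.
\<close>

section \<open>Finite fields\<close>

lemma prime_CHAR_finite_field: "prime CHAR('a::{finite,field})"
  by (rule prime_CHAR_semidom) (simp add: finite_imp_CHAR_pos)

lemma CHAR_finite_field_pos: "CHAR('a::{finite,field}) > 0"
  using prime_CHAR_finite_field prime_gt_0_nat by blast

lemma CHAR_finite_field_gt_1: "CHAR('a::{finite,field}) > 1"
  using prime_CHAR_finite_field prime_gt_1_nat by blast

lemma CARD_finite_field_ge_2: "CARD('a::{finite,field}) \<ge> 2"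
  using card_mono[of "UNIV :: 'a set" "{0, 1}"] by simp

lemma power_CARD_minus_1_eq_1:
  assumes "(x :: 'a::{finite,field}) \<noteq> 0"
  shows "x ^ (CARD('a) - 1) = 1"
proof -
  let ?U = "UNIV - {0 :: 'a}"
  have "(\<Prod>y\<in>?U. x * y) = (\<Prod>y\<in>?U. y)"
    by (rule prod.reindex_bij_witness[of _ "\<lambda>y. y / x" "\<lambda>y. x * y"]) (use assms in auto)
  moreover have "(\<Prod>y\<in>?U. x * y) = x ^ (CARD('a) - 1) * (\<Prod>y\<in>?U. y)"
    by (simp add: prod.distrib card_Diff_subset)
  moreover have "(\<Prod>y\<in>?U. y) \<noteq> 0" by simp
  ultimately show ?thesis by simp
qed

lemma power_CARD_eq_self: "(x :: 'a::{finite,field}) ^ CARD('a) = x"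
proof (cases "x = 0")
  case False
  have "CARD('a) = Suc (CARD('a) - 1)" using CARD_finite_field_ge_2[where 'a='a] by simp
  then show ?thesis using power_CARD_minus_1_eq_1[OF False] by (metis mult.right_neutral power_Suc)
qed simp

lemma inj_power_coprime:
  assumes "d > 0" and "coprime d (CARD('a::{finite,field}) - 1)"
  shows "inj (\<lambda>x::'a. x ^ d)"
proof (rule injI)
  obtain u v where uv: "d * u = (CARD('a) - 1) * v + 1"
    using bezout_nat[of d "CARD('a) - 1"] assms by auto
  fix x y :: 'a assume eq: "x ^ d = y ^ d"
  show "x = y"
  proof (cases "y = 0")
    case False
    define z where "z = x / y"
    have "z \<noteq> 0" using eq False assms(1) by (auto simp: z_def power_0_left)
    have "z ^ d = 1" using eq False by (simp add: z_def power_divide)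
    hence "1 = z ^ (d * u)" by (simp add: power_mult)
    also have "\<dots> = (z ^ (CARD('a) - 1)) ^ v * z"
      by (simp only: uv power_add power_mult power_one_right)
    also have "\<dots> = z" by (simp only: power_CARD_minus_1_eq_1[OF \<open>z \<noteq> 0\<close>] power_one mult_1_left)
    finally show ?thesis using False by (simp add: z_def)
  qed (use eq assms(1) in \<open>simp add: power_0_left\<close>)
qed

lemma surj_power_coprime:
  assumes "d > 0" and "coprime d (CARD('a::{finite,field}) - 1)"
  shows "surj (\<lambda>x::'a. x ^ d)"
  by (rule finite_UNIV_inj_surj[OF _ inj_power_coprime[OF assms]]) simp

lemma sum_power_coprime_reindex:
  assumes "d > 0" and "coprime d (CARD('a::{finite,field}) - 1)"
  shows "(\<Sum>x\<in>UNIV. f (x ^ d :: 'a)) = (\<Sum>x\<in>UNIV. f x)"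
  using sum.reindex[OF inj_power_coprime[OF assms], of f] surj_power_coprime[OF assms]
  by (simp add: o_def)

lemma sum_mult_reindex:
  assumes "(s::'a::{finite,field}) \<noteq> 0"
  shows "(\<Sum>x\<in>UNIV. f (s * x)) = (\<Sum>x\<in>UNIV. f x)"
  by (rule sum.reindex_bij_witness[of _ "\<lambda>x. x / s" "\<lambda>x. s * x"]) (use assms in auto)

text \<open>\<open>CARD('a)\<close> is a power of \<open>p\<close>: an additively closed set containing \<open>0\<close> is a subgroup
  (as \<open>-v = (p - 1) v\<close>), and adjoining the multiples of an element outside it multiplies its size
  by \<open>p\<close>.\<close>
definition add_closed :: "'a::{finite,field} set \<Rightarrow> bool" where
  "add_closed V \<longleftrightarrow> 0 \<in> V \<and> (\<forall>x\<in>V. \<forall>y\<in>V. x + y \<in> V)"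

definition adjoin_multiples :: "'a::{finite,field} set \<Rightarrow> 'a \<Rightarrow> 'a set" where
  "adjoin_multiples V y = (\<lambda>(v, j). v + of_nat j * y) ` (V \<times> {..<CHAR('a)})"

lemma add_closed_of_nat_mult: "add_closed V \<Longrightarrow> v \<in> V \<Longrightarrow> of_nat m * v \<in> V"
  by (induction m) (auto simp: add_closed_def distrib_right)

lemma add_closed_diff:
  assumes V: "add_closed (V :: 'a::{finite,field} set)" and "u \<in> V" "v \<in> V"
  shows "u - v \<in> V"
proof -
  have "of_nat (CHAR('a) - 1) * v = - v"
    using CHAR_finite_field_gt_1[where 'a='a]
    by (simp add: eq_neg_iff_add_eq_0 of_nat_diff distrib_right)
  moreover have "u + of_nat (CHAR('a) - 1) * v \<in> V"
    using assms add_closed_of_nat_mult[OF V \<open>v \<in> V\<close>] by (simp add: add_closed_def)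
  ultimately show ?thesis by simp
qed

lemma add_closed_of_nat_mult_cancel:
  assumes V: "add_closed (V :: 'a::{finite,field} set)"
    and m: "\<not> CHAR('a) dvd m" and mv: "of_nat m * y \<in> V"
  shows "y \<in> V"
proof -
  have "coprime m CHAR('a)"
    using prime_imp_coprime[OF prime_CHAR_finite_field m] by (simp add: coprime_commute)
  then obtain m' where "[m * m' = 1] (mod CHAR('a))" using cong_solve_coprime_nat by auto
  hence "(of_nat (m' * m) :: 'a) = of_nat 1" by (simp only: of_nat_eq_iff_cong_CHAR mult.commute)
  hence "y = (of_nat m' * of_nat m) * y" by simp
  also have "\<dots> = of_nat m' * (of_nat m * y)" by (rule mult.assoc)
  also have "\<dots> \<in> V" by (rule add_closed_of_nat_mult[OF V mv])
  finally show ?thesis .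
qed

lemma add_mult_in_adjoin_multiples:
  assumes "v \<in> V"
  shows "v + of_nat j * y \<in> adjoin_multiples V (y :: 'a::{finite,field})"
proof -
  have "(\<lambda>(v, j). v + of_nat j * y) (v, j mod CHAR('a)) \<in> adjoin_multiples V y"
    using assms CHAR_finite_field_pos[where 'a='a] unfolding adjoin_multiples_def
    by (intro imageI) simp
  moreover have "(of_nat (j mod CHAR('a)) :: 'a) = of_nat j"
    by (simp add: of_nat_eq_iff_cong_CHAR cong_def)
  ultimately show ?thesis by (simp only: case_prod_conv)
qed

lemma add_closed_adjoin_multiples:
  assumes V: "add_closed V"
  shows "add_closed (adjoin_multiples V (y :: 'a::{finite,field}))"
  unfolding add_closed_def
proof safe
  show "0 \<in> adjoin_multiples V y"
    using add_mult_in_adjoin_multiples[of 0 V 0 y] V by (simp add: add_closed_def)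
  fix a b assume "a \<in> adjoin_multiples V y" "b \<in> adjoin_multiples V y"
  then obtain v j w k where vw: "v \<in> V" "w \<in> V" and "a = v + of_nat j * y" "b = w + of_nat k * y"
    unfolding adjoin_multiples_def by auto
  hence "a + b = (v + w) + of_nat (j + k) * y" by (simp add: algebra_simps)
  moreover have "v + w \<in> V" using V vw by (simp add: add_closed_def)
  ultimately show "a + b \<in> adjoin_multiples V y" by (simp only: add_mult_in_adjoin_multiples)
qed

lemma card_adjoin_multiples:
  fixes V :: "'a::{finite,field} set"
  assumes V: "add_closed V" and y: "y \<notin> V"
  shows "card (adjoin_multiples V y) = CHAR('a) * card V"
proof -
  let ?p = "CHAR('a)"
  have same_j: "j = k" if "v \<in> V" "w \<in> V" "k \<le> j" "j < ?p"
    and eq: "v + of_nat j * y = w + of_nat k * y" for v w j k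
  proof (rule ccontr)
    assume "j \<noteq> k"
    with that have "\<not> ?p dvd j - k" by (auto dest: dvd_imp_le)
    moreover have "of_nat (j - k) * y = (v + of_nat j * y) - (v + of_nat k * y)"
      using \<open>k \<le> j\<close> by (simp add: of_nat_diff algebra_simps)
    hence "of_nat (j - k) * y \<in> V" unfolding eq using add_closed_diff[OF V] that by simp
    ultimately have "y \<in> V" by (rule add_closed_of_nat_mult_cancel[OF V])
    thus False using y by contradiction
  qed
  have "inj_on (\<lambda>(v, j). v + of_nat j * y) (V \<times> {..<?p})"
  proof (rule inj_onI, clarsimp)
    fix v j w k assume "v \<in> V" "w \<in> V" "j < ?p" "k < ?p"
      and eq: "v + of_nat j * y = w + of_nat k * y"
    moreover from this have "j = k"
      using same_j[of v w k j] same_j[of w v j k] by (cases "k \<le> j") simp_all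
    ultimately show "v = w \<and> j = k" by simp
  qed
  thus ?thesis unfolding adjoin_multiples_def by (simp add: card_image card_cartesian_product)
qed

lemma psubset_adjoin_multiples:
  assumes "add_closed V" and "y \<notin> V"
  shows "V \<subset> adjoin_multiples V (y :: 'a::{finite,field})"
proof -
  have "V \<subseteq> adjoin_multiples V y" using add_mult_in_adjoin_multiples[of _ V 0 y] by auto
  moreover have "y \<in> adjoin_multiples V y"
    using add_mult_in_adjoin_multiples[of 0 V 1 y] assms(1) by (simp add: add_closed_def)
  ultimately show ?thesis using assms(2) by blast
qed

lemma card_add_closed_CHAR_power:
  assumes "add_closed (V :: 'a::{finite,field} set)" and "card V = CHAR('a) ^ k"
  shows "\<exists>n. CARD('a) = CHAR('a) ^ n"
  using assms
proof (induction "CARD('a) - card V" arbitrary: V k rule: less_induct)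
  case less
  show ?case
  proof (cases "V = UNIV")
    case True
    with less.prems(2) show ?thesis by blast
  next
    case False
    then obtain y where y: "y \<notin> V" by auto
    let ?V' = "adjoin_multiples V y"
    have "card V < card ?V'"
      using psubset_adjoin_multiples[OF less.prems(1) y] by (simp add: psubset_card_mono)
    moreover have "card ?V' \<le> CARD('a)" by (simp add: card_mono)
    ultimately have smaller: "CARD('a) - card ?V' < CARD('a) - card V"
      by (simp only: diff_less_mono2)
    have "card ?V' = CHAR('a) ^ Suc k"
      by (simp only: card_adjoin_multiples[OF less.prems(1) y] less.prems(2) power_Suc)
    with smaller add_closed_adjoin_multiples[OF less.prems(1)] show ?thesis by (rule less.hyps)
  qed
qed

lemma CARD_eq_CHAR_power: "\<exists>n. CARD('a::{finite,field}) = CHAR('a) ^ n"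
  by (rule card_add_closed_CHAR_power[of "{0}" 0]) (auto simp: add_closed_def)

lemma CARD_eq_CHAR_power_field_ext_degree:
  "CARD('a::{finite,field}) = CHAR('a) ^ field_ext_degree TYPE('a)"
proof -
  obtain n where n: "CARD('a) = CHAR('a) ^ n" using CARD_eq_CHAR_power by blast
  have "field_ext_degree TYPE('a) = n" unfolding field_ext_degree_def
  proof (rule the_equality)
    fix m assume "CHAR('a) ^ m = CARD('a)"
    thus "m = n" using n CHAR_finite_field_gt_1[where 'a='a] by (simp add: power_inject_exp)
  qed (use n in simp)
  thus ?thesis using n by simp
qed

lemma field_ext_degree_pos: "field_ext_degree TYPE('a::{finite,field}) > 0"
  using CARD_eq_CHAR_power_field_ext_degree[where 'a='a] CARD_finite_field_ge_2[where 'a='a]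
  by (cases "field_ext_degree TYPE('a)") auto

lemma uminus_one_power_coprime:
  assumes "coprime d (CARD('a::{finite,field}) - 1)"
  shows "(-1::'a) ^ d = -1"
proof (cases "CHAR('a) = 2")
  case True
  hence "(-1::'a) = 1" by (rule uminus_CHAR_2)
  thus ?thesis by (metis power_one)
next
  case False
  hence "CHAR('a) > 2" using prime_ge_2_nat[OF prime_CHAR_finite_field[where 'a='a]] by simp
  hence "odd CHAR('a)" by (rule prime_odd_nat[OF prime_CHAR_finite_field])
  hence "even (CARD('a) - 1)"
    using CARD_eq_CHAR_power_field_ext_degree[where 'a='a] CARD_finite_field_ge_2[where 'a='a]
    by simp
  have "odd d"
  proof
    assume "even d"
    hence "is_unit (2::nat)" using coprime_common_divisor[OF assms _ \<open>even (CARD('a) - 1)\<close>] by blast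
    thus False by simp
  qed
  thus ?thesis by simp
qed

section \<open>The canonical additive character\<close>

definition unit_root :: "nat \<Rightarrow> complex" where
  "unit_root p = exp (2 * pi * \<i> / of_nat p)"

lemma unit_root_power: "unit_root p ^ m = exp (2 * pi * \<i> * of_nat m / of_nat p)"
proof -
  have "unit_root p ^ m = exp (of_nat m * (2 * pi * \<i> / of_nat p))"
    unfolding unit_root_def by (rule exp_of_nat_mult[symmetric])
  thus ?thesis by (simp add: field_simps)
qed

lemma unit_root_power_eq_1_iff:
  assumes "p > 0"
  shows "unit_root p ^ m = 1 \<longleftrightarrow> p dvd m"
proof -
  have "unit_root p ^ m = exp (complex_of_real (2 * pi * m / p) * \<i>)"
    by (simp add: unit_root_power field_simps)
  also have "\<dots> = 1 \<longleftrightarrow> (\<exists>n::int. 2 * pi * m / p = of_int (2 * n) * pi)"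
    by (subst exp_eq_1) simp
  also have "\<dots> \<longleftrightarrow> (\<exists>n::int. real m = of_int n * real p)"
    using assms by (intro ex_cong1) (auto simp: field_simps)
  also have "\<dots> \<longleftrightarrow> (\<exists>n::int. int m = n * int p)"
    by (metis of_int_eq_iff of_int_mult of_int_of_nat_eq)
  also have "\<dots> \<longleftrightarrow> p dvd m"
    by (metis dvd_def int_dvd_int_iff mult.commute)
  finally show ?thesis .
qed

lemma unit_root_power_cong:
  assumes "p > 0" and "[a = b] (mod p)"
  shows "unit_root p ^ a = unit_root p ^ b"
proof -
  have "unit_root p ^ m = unit_root p ^ (m mod p)" for m
  proof -
    have "unit_root p ^ m = (unit_root p ^ p) ^ (m div p) * unit_root p ^ (m mod p)"
      by (metis div_mult_mod_eq power_add power_mult mult.commute)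
    thus ?thesis using unit_root_power_eq_1_iff[OF assms(1), of p] by simp
  qed
  thus ?thesis using assms(2) unfolding cong_def by metis
qed

lemma norm_unit_root: "norm (unit_root p) = 1"
  unfolding unit_root_def by simp

lemma add_char_eq_unit_root_power:
  "add_char (x::'a::{finite,field}) = unit_root CHAR('a) ^ trace_nat x"
  unfolding add_char_def unit_root_power ..

lemma abs_trace_add: "abs_trace (x + y :: 'a::{finite,field}) = abs_trace x + abs_trace y"
  unfolding abs_trace_def by (simp add: freshmans_dream'[OF prime_CHAR_finite_field] sum.distrib)

lemma abs_trace_power_CHAR: "abs_trace (x::'a::{finite,field}) ^ CHAR('a) = abs_trace x"
proof -
  let ?p = "CHAR('a)" and ?n = "field_ext_degree TYPE('a)"
  define f where "f i = x ^ (?p ^ i)" for i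
  have "abs_trace x ^ ?p = (\<Sum>i<?n. f i ^ ?p)"
    unfolding abs_trace_def f_def by (rule freshmans_dream_sum[OF prime_CHAR_finite_field refl])
  also have "\<dots> = (\<Sum>i<?n. f (Suc i))"
    by (simp add: f_def power_mult[symmetric] mult.commute)
  also have "\<dots> = (\<Sum>i<?n. f i)"
  proof -
    have "f ?n = f 0"
      using power_CARD_eq_self[of x] unfolding f_def CARD_eq_CHAR_power_field_ext_degree by simp
    thus ?thesis using sum.lessThan_Suc_shift[of f ?n] by (simp add: add.commute)
  qed
  finally show ?thesis unfolding abs_trace_def f_def .
qed

lemma of_nat_power_CHAR: "(of_nat m :: 'a::{finite,field}) ^ CHAR('a) = of_nat m"
proof (induction m)
  case (Suc m)
  have "(of_nat m + 1 :: 'a) ^ CHAR('a) = of_nat m ^ CHAR('a) + 1 ^ CHAR('a)"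
    by (rule freshmans_dream[OF prime_CHAR_finite_field refl])
  thus ?case using Suc by (simp add: add.commute)
qed (simp add: zero_power CHAR_finite_field_pos)

text \<open>The \<open>p\<close> elements of the prime field already exhaust the at most \<open>p\<close> roots of \<open>X\<^sup>p - X\<close>.\<close>
lemma power_CHAR_eq_self_imp_of_nat:
  fixes y :: "'a::{finite,field}"
  assumes "y ^ CHAR('a) = y"
  shows "\<exists>m<CHAR('a). y = of_nat m"
proof -
  let ?p = "CHAR('a)"
  define P :: "'a poly" where "P = Polynomial.monom 1 ?p + [:0, -1:]"
  have p: "?p > 1" by (rule CHAR_finite_field_gt_1)
  have "degree P = ?p" unfolding P_def using p
    by (subst degree_add_eq_left) (auto simp: degree_monom_eq)
  hence "P \<noteq> 0" using p by auto
  have roots: "{z. poly P z = 0} = {z. z ^ ?p = z}" by (simp add: P_def poly_monom)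
  define S where "S = (of_nat ` {..<?p} :: 'a set)"
  have "card S = ?p" unfolding S_def
    by (subst card_image) (auto intro!: inj_onI simp: of_nat_eq_iff_cong_CHAR cong_def)
  moreover have sub: "S \<subseteq> {z. poly P z = 0}" unfolding S_def roots by (auto simp: of_nat_power_CHAR)
  moreover have "card {z. poly P z = 0} \<le> ?p"
    using card_poly_roots_bound[OF \<open>P \<noteq> 0\<close>] \<open>degree P = ?p\<close> by simp
  ultimately have "card {z. poly P z = 0} = card S" using card_mono[OF _ sub] by simp
  with sub have "S = {z. poly P z = 0}" by (intro card_subset_eq) auto
  with assms show ?thesis unfolding S_def roots by auto
qed

lemma trace_nat:
  fixes x :: "'a::{finite,field}"
  shows "trace_nat x < CHAR('a)" and "of_nat (trace_nat x) = abs_trace x"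
proof -
  obtain m where m: "m < CHAR('a)" "abs_trace x = of_nat m"
    using power_CHAR_eq_self_imp_of_nat[OF abs_trace_power_CHAR] by blast
  have "trace_nat x = m" unfolding trace_nat_def
  proof (rule the_equality)
    fix m' assume "m' < CHAR('a) \<and> of_nat m' = abs_trace x"
    thus "m' = m" using m by (auto simp: of_nat_eq_iff_cong_CHAR cong_def)
  qed (use m in simp)
  with m show "trace_nat x < CHAR('a)" "of_nat (trace_nat x) = abs_trace x" by simp_all
qed

text \<open>The trace is a polynomial of degree \<open>p\<^sup>n\<^sup>-\<^sup>1 < q\<close>, so it cannot vanish identically.\<close>
lemma abs_trace_nonzero: "\<exists>x::'a::{finite,field}. abs_trace x \<noteq> 0"
proof (rule ccontr)
  assume "\<not> ?thesis"
  hence all0: "abs_trace x = 0" for x :: 'a by blast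
  let ?p = "CHAR('a)" and ?n = "field_ext_degree TYPE('a)"
  define T :: "'a poly" where "T = (\<Sum>i<?n. Polynomial.monom 1 (?p ^ i))"
  have n: "?n > 0" by (rule field_ext_degree_pos)
  have p: "?p > 1" by (rule CHAR_finite_field_gt_1)
  have "Polynomial.coeff T (?p ^ (?n - 1)) = (\<Sum>i\<in>{?n - 1}. 1)"
    unfolding T_def coeff_sum coeff_monom
    using n p by (intro sum.mono_neutral_cong_right) (auto simp: power_inject_exp)
  hence "T \<noteq> 0" by auto
  have "degree T \<le> ?p ^ (?n - 1)" unfolding T_def
    using p by (intro degree_sum_le) (auto simp: degree_monom_eq intro: power_increasing)
  moreover have "{x. poly T x = 0} = UNIV"
    using all0 by (auto simp: T_def abs_trace_def poly_sum poly_monom)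
  hence "CARD('a) \<le> degree T" using card_poly_roots_bound[OF \<open>T \<noteq> 0\<close>] by simp
  moreover have "?p ^ (?n - 1) < ?p ^ ?n" using p n by (intro power_strict_increasing) auto
  ultimately show False unfolding CARD_eq_CHAR_power_field_ext_degree by simp
qed

lemma add_char_add: "add_char (x + y :: 'a::{finite,field}) = add_char x * add_char y"
proof -
  have "(of_nat (trace_nat (x + y)) :: 'a) = of_nat (trace_nat x + trace_nat y)"
    by (simp add: trace_nat abs_trace_add)
  hence "[trace_nat (x + y) = trace_nat x + trace_nat y] (mod CHAR('a))"
    by (simp only: of_nat_eq_iff_cong_CHAR)
  thus ?thesis unfolding add_char_eq_unit_root_power
    by (simp add: unit_root_power_cong[OF CHAR_finite_field_pos] power_add)
qed

lemma norm_add_char [simp]: "norm (add_char (x::'a::{finite,field})) = 1"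
  by (simp add: add_char_eq_unit_root_power norm_power norm_unit_root)

lemma add_char_0 [simp]: "add_char (0::'a::{finite,field}) = 1"
proof -
  have "abs_trace (0::'a) = 0" by (simp add: abs_trace_def zero_power CHAR_finite_field_pos)
  hence "trace_nat (0::'a) = 0"
    using trace_nat[of "0::'a"] by (auto simp: of_nat_eq_0_iff_char_dvd dest: dvd_imp_le)
  thus ?thesis by (simp add: add_char_eq_unit_root_power)
qed

lemma add_char_uminus: "add_char (- x :: 'a::{finite,field}) = cnj (add_char x)"
proof -
  have "add_char (- x) * add_char x = 1" by (simp flip: add_char_add)
  moreover have "cnj (add_char x) * add_char x = 1"
    using norm_add_char[of x]
    by (simp add: mult.commute complex_norm_square[symmetric] flip: complex_mult_cnj)
  ultimately show ?thesis by (metis mult_cancel_right zero_neq_one mult_zero_left)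
qed

lemma add_char_of_nat_mult: "add_char (of_nat j * x :: 'a::{finite,field}) = add_char x ^ j"
proof (induction j)
  case (Suc j)
  have "of_nat (Suc j) * x = x + of_nat j * x" by (simp add: algebra_simps)
  thus ?case using Suc by (simp only: add_char_add power_Suc)
qed simp

lemma sum_add_char: "(\<Sum>x\<in>UNIV. add_char (x::'a::{finite,field})) = 0"
proof -
  obtain y :: 'a where "abs_trace y \<noteq> 0" using abs_trace_nonzero by blast
  hence "\<not> CHAR('a) dvd trace_nat y" by (metis trace_nat(2) of_nat_eq_0_iff_char_dvd)
  hence y: "add_char y \<noteq> 1"
    by (simp add: add_char_eq_unit_root_power unit_root_power_eq_1_iff CHAR_finite_field_pos)
  have "(\<Sum>x\<in>UNIV. add_char (x::'a)) = (\<Sum>x\<in>UNIV. add_char (x + y))"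
    by (rule sum.reindex_bij_witness[of _ "\<lambda>x. x + y" "\<lambda>x. x - y"]) auto
  also have "\<dots> = (\<Sum>x\<in>UNIV. add_char (x::'a)) * add_char y"
    by (simp add: add_char_add sum_distrib_right)
  finally show ?thesis using y by (metis mult_cancel_left1)
qed

lemma sum_add_char_mult:
  "(\<Sum>x\<in>UNIV. add_char (a * x :: 'a::{finite,field})) = (if a = 0 then of_nat CARD('a) else 0)"
  by (cases "a = 0") (simp_all add: sum_mult_reindex sum_add_char)

lemma sum_add_char_mult_right:
  "(\<Sum>x\<in>UNIV. add_char (x * a :: 'a::{finite,field})) = (if a = 0 then of_nat CARD('a) else 0)"
  using sum_add_char_mult[of a] by (simp add: mult.commute)

section \<open>Power moments of the Weil sums\<close>

text \<open>For \<open>c = j\<close> in the prime field this is the image of \<open>weil_sum d a\<close> under the Galois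
  automorphism \<open>\<zeta>\<^sub>p \<mapsto> \<zeta>\<^sub>p\<^sup>j\<close>.\<close>
definition scaled_weil_sum :: "nat \<Rightarrow> 'a::{finite,field} \<Rightarrow> 'a \<Rightarrow> complex" where
  "scaled_weil_sum d c a = (\<Sum>x\<in>UNIV. add_char (c * (x ^ d + a * x)))"

lemma scaled_weil_sum_1 [simp]: "scaled_weil_sum d 1 a = weil_sum d a"
  by (simp add: scaled_weil_sum_def weil_sum_def)

lemma weil_sum_0:
  assumes "d > 0" and "coprime d (CARD('a::{finite,field}) - 1)"
  shows "weil_sum d (0::'a) = 0"
  using sum_power_coprime_reindex[OF assms, of add_char] by (simp add: weil_sum_def sum_add_char)

lemma sum_weil_sum:
  assumes "d > 0"
  shows "(\<Sum>a\<in>UNIV. weil_sum d (a::'a::{finite,field})) = of_nat CARD('a)"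
proof -
  have "(\<Sum>a\<in>UNIV. weil_sum d (a::'a)) =
      (\<Sum>x\<in>UNIV. add_char (x ^ d) * (\<Sum>a\<in>UNIV. add_char (a * (x::'a))))"
    unfolding weil_sum_def by (subst sum.swap) (simp add: add_char_add sum_distrib_left)
  also have "\<dots> = (\<Sum>x\<in>UNIV. if x = (0::'a) then of_nat CARD('a) else 0)"
    using assms by (intro sum.cong) (simp_all add: sum_add_char_mult mult.commute zero_power)
  finally show ?thesis by simp
qed

lemma sum_weil_sum_mult_cnj_scaled:
  assumes "d > 0" and "coprime d (CARD('a::{finite,field}) - 1)"
  shows "(\<Sum>a\<in>UNIV. weil_sum d (a::'a) * cnj (scaled_weil_sum d c a)) =
     (if c ^ d = c then of_nat CARD('a) ^ 2 else 0)"
proof -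
  let ?q = "of_nat CARD('a) :: complex"
  have char: "add_char (x ^ d + a * x) * cnj (add_char (c * (y ^ d + a * y))) =
      add_char (x ^ d - c * y ^ d) * add_char ((x - c * y) * a)" for x y a :: 'a
  proof -
    have "(x ^ d + a * x) + - (c * (y ^ d + a * y)) = (x ^ d - c * y ^ d) + (x - c * y) * a"
      by (simp add: algebra_simps)
    thus ?thesis by (metis add_char_add add_char_uminus)
  qed
  have "(\<Sum>a\<in>UNIV. weil_sum d (a::'a) * cnj (scaled_weil_sum d c a)) =
     (\<Sum>a\<in>UNIV. \<Sum>x\<in>UNIV. \<Sum>y\<in>UNIV. add_char (x ^ d - c * y ^ d) * add_char ((x - c * y) * a))"
    unfolding weil_sum_def scaled_weil_sum_def cnj_sum sum_product char ..
  also have "\<dots> = (\<Sum>x\<in>UNIV. \<Sum>y\<in>UNIV.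
      add_char (x ^ d - c * y ^ d) * (\<Sum>a\<in>UNIV. add_char ((x - c * y) * a)))"
    by (subst sum.swap, rule sum.cong[OF refl], subst sum.swap) (simp add: sum_distrib_left)
  also have "\<dots> = (\<Sum>y\<in>UNIV. \<Sum>x\<in>UNIV. if x = c * y then add_char (x ^ d - c * y ^ d) * ?q else 0)"
    by (subst sum.swap) (intro sum.cong refl, simp add: sum_add_char_mult)
  also have "\<dots> = (\<Sum>y\<in>UNIV. add_char ((c * y) ^ d - c * y ^ d) * ?q)"
    by simp
  also have "\<dots> = ?q * (\<Sum>y\<in>UNIV. add_char ((c ^ d - c) * y ^ d))"
    by (simp add: sum_distrib_left power_mult_distrib algebra_simps)
  also have "(\<Sum>y\<in>UNIV. add_char ((c ^ d - c) * y ^ d)) = (\<Sum>y\<in>UNIV. add_char ((c ^ d - c) * y))"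
    by (rule sum_power_coprime_reindex[OF assms, of "\<lambda>y. add_char ((c ^ d - c) * y)"])
  finally show ?thesis by (simp add: sum_add_char_mult power2_eq_square)
qed

lemma sum_weil_sum_mult_cnj:
  assumes "d > 0" and "coprime d (CARD('a::{finite,field}) - 1)"
  shows "(\<Sum>a\<in>UNIV. weil_sum d (a::'a) * cnj (weil_sum d a)) = of_nat CARD('a) ^ 2"
  using sum_weil_sum_mult_cnj_scaled[OF assms, of 1] by simp

lemma sum_power3:
  fixes f :: "'b \<Rightarrow> 'c::comm_semiring_1"
  shows "(\<Sum>x\<in>A. f x) ^ 3 = (\<Sum>x\<in>A. \<Sum>y\<in>A. \<Sum>z\<in>A. f x * f y * f z)"
proof -
  have "(\<Sum>x\<in>A. f x) ^ 3 = (\<Sum>x\<in>A. f x) * ((\<Sum>y\<in>A. f y) * (\<Sum>z\<in>A. f z))"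
    by (simp add: power3_eq_cube mult.assoc)
  also have "\<dots> = (\<Sum>x\<in>A. \<Sum>y\<in>A. f x * (\<Sum>z\<in>A. f y * f z))"
    by (simp only: sum_product)
  also have "\<dots> = (\<Sum>x\<in>A. \<Sum>y\<in>A. \<Sum>z\<in>A. f x * f y * f z)"
    by (simp add: sum_distrib_left mult.assoc)
  finally show ?thesis .
qed

lemma sum_weil_sum_power3:
  "(\<Sum>a\<in>UNIV. weil_sum d (a::'a::{finite,field}) ^ 3) =
     of_nat CARD('a) * (\<Sum>x\<in>UNIV. \<Sum>y\<in>UNIV. add_char (x ^ d + y ^ d + (- (x + y :: 'a)) ^ d))"
proof -
  let ?q = "of_nat CARD('a) :: complex"
  let ?P = "\<lambda>x y z::'a. add_char (x ^ d + y ^ d + z ^ d)"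
  have char: "add_char (x ^ d + a * x) * add_char (y ^ d + a * y) * add_char (z ^ d + a * z) =
      ?P x y z * add_char ((x + y + z) * a)" for x y z a :: 'a
  proof -
    have "(x ^ d + a * x) + (y ^ d + a * y) + (z ^ d + a * z) =
        (x ^ d + y ^ d + z ^ d) + (x + y + z) * a"
      by (simp add: algebra_simps)
    thus ?thesis by (metis add_char_add)
  qed
  have "(\<Sum>a\<in>UNIV. weil_sum d (a::'a) ^ 3) =
      (\<Sum>a\<in>UNIV. \<Sum>x\<in>UNIV. \<Sum>y\<in>UNIV. \<Sum>z\<in>UNIV. ?P x y z * add_char ((x + y + z) * a))"
    unfolding weil_sum_def sum_power3 char ..
  also have "\<dots> = (\<Sum>x\<in>UNIV. \<Sum>y\<in>UNIV. \<Sum>z\<in>UNIV. \<Sum>a\<in>UNIV. ?P x y z * add_char ((x + y + z) * a))"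
    by (subst sum.swap, rule sum.cong[OF refl], subst sum.swap, rule sum.cong[OF refl],
        rule sum.swap)
  also have "\<dots> = (\<Sum>x\<in>UNIV. \<Sum>y\<in>UNIV. \<Sum>z\<in>UNIV. if z = - (x + y) then ?P x y z * ?q else 0)"
    using eq_neg_iff_add_eq_0[of _ "x + y" for x y :: 'a]
    by (intro sum.cong refl) (simp add: sum_add_char_mult add.commute flip: sum_distrib_left)
  also have "\<dots> = (\<Sum>x\<in>UNIV. \<Sum>y\<in>UNIV. ?q * ?P x y (- (x + y)))"
    by (simp add: mult.commute)
  finally show ?thesis by (simp add: sum_distrib_left)
qed

definition power_defect :: "nat \<Rightarrow> 'a::comm_ring_1 \<Rightarrow> 'a \<Rightarrow> 'a" where
  "power_defect d x y = (x + y) ^ d - x ^ d - y ^ d"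

lemma power_defect_mult: "power_defect d (s * x) (s * y) = s ^ d * power_defect d x y"
  unfolding power_defect_def by (simp add: power_mult_distrib algebra_simps flip: distrib_left)

lemma power_defect_mult_right: "power_defect d x (x * t) = x ^ d * ((t + 1) ^ d - t ^ d - 1)"
  using power_defect_mult[of d x 1 t] by (simp add: power_defect_def algebra_simps)

text \<open>Writing \<open>c = s^d\<close> (possible as \<open>x \<mapsto> x^d\<close> is onto) and substituting \<open>(x, y) \<mapsto> (s x, s y)\<close>.\<close>
lemma sum_add_char_power_defect_scale:
  assumes "d > 0" and "coprime d (CARD('a::{finite,field}) - 1)" and "(c::'a) \<noteq> 0"
  shows "(\<Sum>x\<in>UNIV. \<Sum>y\<in>UNIV. add_char (c * power_defect d x y)) =
    (\<Sum>x\<in>UNIV. \<Sum>y\<in>UNIV. add_char (power_defect d x (y::'a)))"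
proof -
  obtain s :: 'a where s: "c = s ^ d" using surj_power_coprime[OF assms(1,2)] by (metis surjD)
  hence "s \<noteq> 0" using assms(1,3) by (auto simp: zero_power)
  have "(\<Sum>x\<in>UNIV. \<Sum>y\<in>UNIV. add_char (c * power_defect d x y)) =
      (\<Sum>x\<in>UNIV. \<Sum>y\<in>UNIV. add_char (power_defect d (s * x) (s * y)))"
    by (simp add: power_defect_mult s)
  also have "\<dots> = (\<Sum>x\<in>UNIV. \<Sum>y\<in>UNIV. add_char (power_defect d x (y::'a)))"
    using sum_mult_reindex[OF \<open>s \<noteq> 0\<close>, of "\<lambda>x. \<Sum>y\<in>UNIV. add_char (power_defect d x (s * y))"]
      sum_mult_reindex[OF \<open>s \<noteq> 0\<close>, of "\<lambda>y. add_char (power_defect d _ y)"]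
    by simp
  finally show ?thesis .
qed

lemma sum_sum_if_eq_card:
  fixes P :: "'a::finite \<Rightarrow> 'b::finite \<Rightarrow> bool"
  shows "(\<Sum>x\<in>UNIV. \<Sum>y\<in>UNIV. if P x y then c else 0) = of_nat (card {(x, y). P x y}) * c"
proof -
  have "(\<Sum>x\<in>UNIV. \<Sum>y\<in>UNIV. if P x y then c else 0) = (\<Sum>z\<in>UNIV. if case_prod P z then c else 0)"
    by (simp add: sum.cartesian_product case_prod_beta flip: UNIV_Times_UNIV)
  also have "\<dots> = of_nat (card {(x, y). P x y}) * c"
    by (simp add: sum.If_cases)
  finally show ?thesis .
qed

text \<open>Detecting \<open>power_defect d x y = 0\<close> by orthogonality, and using that the inner double sum does
  not depend on \<open>c \<noteq> 0\<close>.\<close>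
lemma card_power_defect_eq_0_sum_add_char:
  assumes "d > 0" and "coprime d (CARD('a::{finite,field}) - 1)"
  shows "of_nat CARD('a) * of_nat (card {(x, y). power_defect d x y = (0::'a)}) =
      of_nat CARD('a) ^ 2 +
        of_nat (CARD('a) - 1) * (\<Sum>x\<in>UNIV. \<Sum>y\<in>UNIV. add_char (power_defect d x (y::'a)))"
proof -
  let ?q = "of_nat CARD('a) :: complex"
  define G where "G c = (\<Sum>x\<in>UNIV. \<Sum>y\<in>UNIV. add_char (c * power_defect d x (y::'a)))" for c
  have "(\<Sum>c\<in>UNIV. G c) = (\<Sum>x\<in>UNIV. \<Sum>y\<in>UNIV. if power_defect d x (y::'a) = 0 then ?q else 0)"
    unfolding G_def
    by (subst sum.swap, rule sum.cong[OF refl], subst sum.swap) (simp add: sum_add_char_mult_right)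
  also have "\<dots> = of_nat (card {(x, y). power_defect d x y = (0::'a)}) * ?q"
    by (rule sum_sum_if_eq_card)
  finally have "(\<Sum>c\<in>UNIV. G c) = \<dots>" .
  moreover have "(\<Sum>c\<in>UNIV. G c) = G 0 + (\<Sum>c\<in>UNIV - {0}. G c)"
    by (simp add: sum.remove)
  moreover have "G 0 = ?q * ?q" by (simp add: G_def)
  moreover have "(\<Sum>c\<in>UNIV - {0}. G c) = of_nat (CARD('a) - 1) * G 1"
    using sum_add_char_power_defect_scale[OF assms] by (simp add: G_def card_Diff_subset)
  ultimately show ?thesis by (simp add: G_def power2_eq_square mult.commute)
qed

lemma card_power_defect_eq_0:
  assumes "d > 0"
  shows "card {(x, y). power_defect d x y = (0::'a::{finite,field})} =
    CARD('a) + (CARD('a) - 1) * card {t::'a. (t + 1) ^ d - t ^ d - 1 = 0}"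
proof -
  let ?R = "{t::'a. (t + 1) ^ d - t ^ d - 1 = 0}"
  define B where "B = (\<lambda>(x, t). (x, x * t)) ` ((UNIV - {0}) \<times> ?R)"
  have "{(x, y). power_defect d x y = 0} = {0} \<times> UNIV \<union> B"
  proof (intro equalityI subsetI)
    fix z assume "z \<in> {(x, y). power_defect d x y = (0::'a)}"
    then obtain x y where z: "z = (x, y)" and F: "power_defect d x y = 0" by auto
    show "z \<in> {0} \<times> UNIV \<union> B"
    proof (cases "x = 0")
      case False
      hence "y / x \<in> ?R" using F power_defect_mult_right[of d x "y / x"] by simp
      hence "(x, x * (y / x)) \<in> B" using False unfolding B_def
        by (intro image_eqI[where x="(x, y / x)"]) auto
      thus ?thesis using False z by simp
    qed (simp add: z)
  next
    fix z assume "z \<in> {0} \<times> UNIV \<union> B"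
    thus "z \<in> {(x, y). power_defect d x y = 0}"
    proof
      assume "z \<in> {0} \<times> UNIV"
      thus ?thesis using assms by (auto simp: power_defect_def zero_power)
    qed (auto simp: B_def power_defect_mult_right)
  qed
  moreover have "inj_on (\<lambda>(x, t). (x, x * t)) ((UNIV - {0}) \<times> ?R)" by (rule inj_onI) auto
  hence "card B = (CARD('a) - 1) * card ?R"
    unfolding B_def by (simp add: card_image card_cartesian_product card_Diff_subset)
  moreover have "({0} \<times> UNIV) \<inter> B = {}" by (auto simp: B_def)
  ultimately show ?thesis by (simp add: card_Un_disjoint card_cartesian_product)
qed

lemma sum_add_char_power_defect:
  assumes "d > 0" and "coprime d (CARD('a::{finite,field}) - 1)"
  shows "(\<Sum>x\<in>UNIV. \<Sum>y\<in>UNIV. add_char (power_defect d x (y::'a))) =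
    of_nat CARD('a) * of_nat (card {t::'a. (t + 1) ^ d - t ^ d - 1 = 0})"
proof -
  let ?q = "of_nat CARD('a) :: complex"
    and ?r = "of_nat (card {t::'a. (t + 1) ^ d - t ^ d - 1 = 0})"
  let ?T = "\<Sum>x\<in>UNIV. \<Sum>y\<in>UNIV. add_char (power_defect d x (y::'a))"
  have "?q * (?q + of_nat (CARD('a) - 1) * ?r) = ?q ^ 2 + of_nat (CARD('a) - 1) * ?T"
    using card_power_defect_eq_0_sum_add_char[OF assms] card_power_defect_eq_0[OF assms(1), where 'a='a]
    by simp
  hence "of_nat (CARD('a) - 1) * (?q * ?r) = of_nat (CARD('a) - 1) * ?T"
    by (simp add: algebra_simps power2_eq_square)
  moreover have "CARD('a) - 1 \<noteq> 0" using CARD_finite_field_ge_2[where 'a='a] by simp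
  ultimately show ?thesis by simp
qed

lemma sum_weil_sum_power3_eq:
  assumes "d > 0" and "coprime d (CARD('a::{finite,field}) - 1)" and "(-1::'a) ^ d = -1"
  shows "(\<Sum>a\<in>UNIV. weil_sum d (a::'a) ^ 3) =
    of_nat CARD('a) ^ 2 * of_nat (card {t::'a. (t + 1) ^ d - t ^ d - 1 = 0})"
proof -
  have eq: "x ^ d + y ^ d + (- (x + y)) ^ d = (-1) * power_defect d x y" for x y :: 'a
  proof -
    have "(- (x + y)) ^ d = - ((x + y) ^ d)" using power_minus[of "x + y" d] assms(3) by simp
    thus ?thesis by (simp add: power_defect_def)
  qed
  have "(\<Sum>a\<in>UNIV. weil_sum d (a::'a) ^ 3) =
      of_nat CARD('a) * (\<Sum>x\<in>UNIV. \<Sum>y\<in>UNIV. add_char ((-1 :: 'a) * power_defect d x y))"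
    by (simp only: sum_weil_sum_power3 eq)
  thus ?thesis
    by (simp only: sum_add_char_power_defect_scale[OF assms(1,2), of "-1"]
        sum_add_char_power_defect[OF assms(1,2)] power2_eq_square mult.assoc neg_equal_0_iff_equal
        one_neq_zero not_False_eq_True)
qed

lemma card_roots_ge_2:
  assumes "d > 0" and "(-1::'a::{finite,field}) ^ d = -1"
  shows "card {t::'a. (t + 1) ^ d - t ^ d - 1 = 0} \<ge> 2"
proof -
  have "{0, -1} \<subseteq> {t::'a. (t + 1) ^ d - t ^ d - 1 = 0}" using assms by (simp add: zero_power)
  from card_mono[OF _ this] show ?thesis by simp
qed

section \<open>Rational sums of roots of unity\<close>

lemma eisenstein_criterion_int:
  fixes f a b :: "int poly" and P :: int
  assumes P: "prime P" and f: "f = a * b"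
    and lead: "\<not> P dvd lead_coeff f"
    and coeffs: "\<And>k. k < degree f \<Longrightarrow> P dvd Polynomial.coeff f k"
    and const: "\<not> P ^ 2 dvd Polynomial.coeff f 0"
  shows "degree a = 0 \<or> degree b = 0"
proof (rule ccontr)
  assume "\<not> ?thesis"
  hence da: "degree a > 0" and db: "degree b > 0" by auto
  have la: "\<not> P dvd lead_coeff a" and lb: "\<not> P dvd lead_coeff b"
    using lead by (auto simp: f lead_coeff_mult)
  hence "a \<noteq> 0" "b \<noteq> 0" by auto
  define r where "r = (LEAST i. \<not> P dvd Polynomial.coeff a i)"
  define s where "s = (LEAST i. \<not> P dvd Polynomial.coeff b i)"
  have r: "\<not> P dvd Polynomial.coeff a r" and s: "\<not> P dvd Polynomial.coeff b s"
    unfolding r_def s_def using la lb by (metis LeastI)+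
  have "r \<le> degree a" "s \<le> degree b"
    unfolding r_def s_def using la lb by (auto intro: Least_le)
  have below_r: "P dvd Polynomial.coeff a i" if "i < r" for i
    using not_less_Least[OF that[unfolded r_def]] by blast
  have below_s: "P dvd Polynomial.coeff b i" if "i < s" for i
    using not_less_Least[OF that[unfolded s_def]] by blast
  have "Polynomial.coeff f (r + s) = Polynomial.coeff a r * Polynomial.coeff b s +
      (\<Sum>i\<in>{..r + s} - {r}. Polynomial.coeff a i * Polynomial.coeff b (r + s - i))"
    unfolding f coeff_mult by (subst sum.remove[of _ r]) auto
  moreover have "P dvd (\<Sum>i\<in>{..r + s} - {r}. Polynomial.coeff a i * Polynomial.coeff b (r + s - i))"
  proof (rule dvd_sum)
    fix i assume "i \<in> {..r + s} - {r}"
    hence "i < r \<or> r + s - i < s" by auto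
    thus "P dvd Polynomial.coeff a i * Polynomial.coeff b (r + s - i)"
      using below_r below_s by auto
  qed
  moreover have "\<not> P dvd Polynomial.coeff a r * Polynomial.coeff b s"
    using r s P by (simp add: prime_dvd_mult_iff)
  ultimately have "\<not> P dvd Polynomial.coeff f (r + s)" by (metis dvd_add_left_iff)
  hence "r + s \<ge> degree f" using coeffs by (meson not_le)
  moreover have "degree f = degree a + degree b"
    using \<open>a \<noteq> 0\<close> \<open>b \<noteq> 0\<close> by (simp add: f degree_mult_eq)
  ultimately have "r = degree a" "s = degree b"
    using \<open>r \<le> degree a\<close> \<open>s \<le> degree b\<close> by linarith+
  hence "P * P dvd Polynomial.coeff a 0 * Polynomial.coeff b 0"
    using below_r below_s da db by (intro mult_dvd_mono) auto
  thus False using const by (simp add: f coeff_mult power2_eq_square)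
qed

lemma map_poly_of_int_add:
  "map_poly of_int (f + g) = (map_poly of_int f + map_poly of_int g :: 'a::comm_ring_1 poly)"
  by (intro poly_eqI) (simp add: coeff_map_poly)

lemma map_poly_of_int_mult:
  "map_poly of_int (f * g) = (map_poly of_int f * map_poly of_int g :: 'a::comm_ring_1 poly)"
  by (intro poly_eqI) (simp add: coeff_map_poly coeff_mult)

lemma map_poly_of_int_const: "map_poly of_int [:c:] = ([:of_int c:] :: 'a::comm_ring_1 poly)"
  by (intro poly_eqI) (simp add: coeff_map_poly coeff_pCons split: nat.splits)

lemma map_poly_of_int_pcompose:
  "map_poly of_int (pcompose f g) =
    (pcompose (map_poly of_int f) (map_poly of_int g) :: 'a::comm_ring_1 poly)"
  by (induction f) (simp_all add: pcompose_pCons map_poly_of_int_add map_poly_of_int_mult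
      map_poly_of_int_const map_poly_pCons)

text \<open>For prime \<open>p\<close> this is the cyclotomic polynomial \<open>\<Phi>\<^sub>p(X + 1) = ((X + 1)^p - 1) / X\<close>.\<close>
definition shifted_cyclotomic :: "nat \<Rightarrow> int poly" where
  "shifted_cyclotomic p = (\<Sum>k<p. Polynomial.monom (int (p choose Suc k)) k)"

lemma coeff_shifted_cyclotomic:
  "Polynomial.coeff (shifted_cyclotomic p) k = (if k < p then int (p choose Suc k) else 0)"
  unfolding shifted_cyclotomic_def by (simp add: coeff_sum coeff_monom)

lemma poly_map_poly_of_int_shifted_cyclotomic:
  "poly (map_poly of_int (shifted_cyclotomic p)) (z :: 'a::comm_ring_1) =
    (\<Sum>k<p. of_nat (p choose Suc k) * z ^ k)"
proof -
  have "map_poly of_int (shifted_cyclotomic p) =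
      (\<Sum>k<p. Polynomial.monom (of_nat (p choose Suc k) :: 'a) k)"
    by (intro poly_eqI) (simp add: coeff_map_poly coeff_shifted_cyclotomic coeff_sum coeff_monom)
  thus ?thesis by (simp add: poly_sum poly_monom)
qed

context
  fixes p :: nat
  assumes p: "prime p"
begin

lemma degree_shifted_cyclotomic: "degree (shifted_cyclotomic p) = p - 1"
proof (rule antisym)
  show "degree (shifted_cyclotomic p) \<le> p - 1"
    by (rule degree_le) (auto simp: coeff_shifted_cyclotomic)
  have "Polynomial.coeff (shifted_cyclotomic p) (p - 1) = 1"
    using prime_gt_0_nat[OF p] by (simp add: coeff_shifted_cyclotomic)
  thus "p - 1 \<le> degree (shifted_cyclotomic p)" by (intro le_degree) simp
qed

lemma lead_coeff_shifted_cyclotomic: "lead_coeff (shifted_cyclotomic p) = 1"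
  using prime_gt_0_nat[OF p] by (simp add: degree_shifted_cyclotomic coeff_shifted_cyclotomic)

lemma irreducible_shifted_cyclotomic: "irreducible (shifted_cyclotomic p)"
proof (rule irreducibleI)
  have p2: "p \<ge> 2" using prime_ge_2_nat[OF p] .
  show "shifted_cyclotomic p \<noteq> 0" "\<not> is_unit (shifted_cyclotomic p)"
    using lead_coeff_shifted_cyclotomic degree_shifted_cyclotomic p2
    by (auto simp: is_unit_poly_iff)
  fix a b assume ab: "shifted_cyclotomic p = a * b"
  have "degree a = 0 \<or> degree b = 0"
  proof (rule eisenstein_criterion_int[of "int p"])
    show "\<not> int p dvd lead_coeff (shifted_cyclotomic p)"
      using p2 by (simp add: lead_coeff_shifted_cyclotomic)
    show "int p dvd Polynomial.coeff (shifted_cyclotomic p) k"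
      if "k < degree (shifted_cyclotomic p)" for k
      using that dvd_choose_prime[of "Suc k" p] p
      by (simp add: degree_shifted_cyclotomic coeff_shifted_cyclotomic)
    show "\<not> (int p) ^ 2 dvd Polynomial.coeff (shifted_cyclotomic p) 0"
      using p2 by (auto simp: coeff_shifted_cyclotomic power2_eq_square dest: zdvd_imp_le)
  qed (use p ab in simp_all)
  moreover have "lead_coeff a * lead_coeff b = 1"
    using ab lead_coeff_shifted_cyclotomic by (simp add: lead_coeff_mult)
  ultimately show "is_unit a \<or> is_unit b"
    by (auto elim!: degree_eq_zeroE simp: is_unit_const_poly_iff zmult_eq_1_iff)
qed

lemma unit_root_power_self: "unit_root p ^ p = 1"
  using unit_root_power_eq_1_iff[of p p] prime_gt_0_nat[OF p] by simp

lemma poly_shifted_cyclotomic_unit_root: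
  "poly (map_poly of_int (shifted_cyclotomic p)) (unit_root p - 1) = 0"
proof -
  let ?\<eta> = "unit_root p - 1"
  have "?\<eta> \<noteq> 0" using unit_root_power_eq_1_iff[of p 1] prime_gt_1_nat[OF p] by simp
  have "?\<eta> * poly (map_poly of_int (shifted_cyclotomic p)) ?\<eta> =
      (\<Sum>k<p. of_nat (p choose Suc k) * ?\<eta> ^ Suc k)"
    by (simp add: poly_map_poly_of_int_shifted_cyclotomic sum_distrib_left algebra_simps)
  also have "\<dots> = (\<Sum>k<Suc p. of_nat (p choose k) * ?\<eta> ^ k * 1 ^ (p - k)) - 1"
    by (subst sum.lessThan_Suc_shift) simp
  also have "\<dots> = (?\<eta> + 1) ^ p - 1"
    by (subst binomial_ring) (simp add: lessThan_Suc_atMost)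
  also have "\<dots> = 0" by (simp add: unit_root_power_self)
  finally show ?thesis using \<open>?\<eta> \<noteq> 0\<close> by simp
qed

text \<open>\<open>\<Phi>\<^sub>p(X + 1)\<close> is irreducible and vanishes at \<open>\<zeta> - 1\<close>, so it divides every integer
  polynomial of least degree vanishing there.\<close>
lemma degree_ge_if_poly_unit_root_minus_1_eq_0:
  assumes "G \<noteq> 0" and "poly (map_poly of_int G) (unit_root p - 1) = 0"
  shows "degree G \<ge> p - 1"
proof -
  let ?\<eta> = "unit_root p - 1" and ?\<Psi> = "shifted_cyclotomic p"
  define S where "S = {H :: int poly. H \<noteq> 0 \<and> poly (map_poly of_int H) ?\<eta> = 0}"
  have "G \<in> S" using assms by (simp add: S_def)
  define m where "m = (LEAST k. \<exists>H\<in>S. degree H = k)"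
  obtain H where "H \<in> S" "degree H = m"
    using LeastI_ex[of "\<lambda>k. \<exists>H\<in>S. degree H = k"] \<open>G \<in> S\<close> unfolding m_def by blast
  hence H: "H \<noteq> 0" "poly (map_poly of_int H) ?\<eta> = 0" by (auto simp: S_def)
  have minimal: "degree K \<ge> m" if "K \<in> S" for K
    unfolding m_def using that by (intro Least_le) blast
  obtain a q where "a \<noteq> 0" and aq: "Polynomial.smult a ?\<Psi> = H * q + pseudo_mod ?\<Psi> H"
    using pseudo_mod(1)[OF H(1), of ?\<Psi>] by blast
  have "pseudo_mod ?\<Psi> H = 0"
  proof (rule ccontr)
    assume "pseudo_mod ?\<Psi> H \<noteq> 0"
    moreover have "poly (map_poly of_int (pseudo_mod ?\<Psi> H)) ?\<eta> = 0"
      using arg_cong[OF aq, of "\<lambda>f. poly (map_poly of_int f) ?\<eta>"] H(2)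
      by (simp add: map_poly_smult map_poly_of_int_add map_poly_of_int_mult
          poly_shifted_cyclotomic_unit_root)
    ultimately have "pseudo_mod ?\<Psi> H \<in> S" by (simp add: S_def)
    thus False using minimal pseudo_mod(2)[OF H(1), of ?\<Psi>] \<open>degree H = m\<close>
      \<open>pseudo_mod ?\<Psi> H \<noteq> 0\<close> by fastforce
  qed
  with aq have aq: "?\<Psi> * [:a:] = H * q" by simp
  have "\<not> ?\<Psi> dvd q"
  proof
    assume "?\<Psi> dvd q"
    then obtain k where "q = ?\<Psi> * k" by (elim dvdE)
    with aq have "?\<Psi> * [:a:] = ?\<Psi> * (H * k)" by (simp add: mult.left_commute)
    moreover have "?\<Psi> \<noteq> 0" using lead_coeff_shifted_cyclotomic by auto
    ultimately have "[:a:] = H * k" using mult_left_cancel by blast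
    hence "degree H = 0" using \<open>a \<noteq> 0\<close> H(1) by (metis add_eq_0_iff_both_eq_0 degree_mult_eq
          degree_pCons_0 mult_zero_right pCons_eq_0_iff)
    then obtain c where "H = [:c:]" by (metis degree_eq_zeroE)
    thus False using H by (simp add: map_poly_of_int_const)
  qed
  moreover have "?\<Psi> dvd H * q" using aq by (metis dvd_triv_left)
  ultimately have "?\<Psi> dvd H"
    using prime_elem_dvd_multD irreducible_imp_prime_poly[OF irreducible_shifted_cyclotomic]
    by blast
  hence "degree ?\<Psi> \<le> degree H" using H(1) by (rule dvd_imp_degree_le)
  thus ?thesis using degree_shifted_cyclotomic minimal[OF \<open>G \<in> S\<close>] \<open>degree H = m\<close> by simp
qed

lemma sum_unit_root_power_mult:
  assumes "\<not> p dvd k"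
  shows "(\<Sum>r<p. unit_root p ^ (k * r)) = 0"
proof -
  have "unit_root p ^ k \<noteq> 1" using unit_root_power_eq_1_iff[of p k] prime_gt_0_nat[OF p] assms
    by simp
  moreover have "(unit_root p ^ k) ^ p = 1"
    using unit_root_power_self by (metis power_mult power_one mult.commute)
  ultimately show ?thesis by (simp add: sum_gp_strict power_mult)
qed

text \<open>Eliminating \<open>\<zeta>\<^sup>p\<^sup>-\<^sup>1 = -(1 + \<zeta> + \<dots> + \<zeta>\<^sup>p\<^sup>-\<^sup>2)\<close> turns the hypothesis into a root \<open>\<zeta>\<close> of
  the integer polynomial \<open>\<Sum>\<^sub>r\<^sub><\<^sub>p\<^sub>-\<^sub>1 m (N r - N (p - 1)) X\<^sup>r - B\<close> of degree \<open>< p - 1\<close>, which must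
  therefore vanish.\<close>
lemma int_combination_unit_root_eq_int:
  fixes N :: "nat \<Rightarrow> int" and B m :: int
  assumes "m \<noteq> 0"
    and eq: "of_int m * (\<Sum>r<p. of_int (N r) * unit_root p ^ r) = (of_int B :: complex)"
    and r: "1 \<le> r" "r < p"
  shows "N r = N (p - 1)"
proof (cases "r = p - 1")
  case False
  let ?z = "unit_root p"
  have pp: "p = Suc (p - 1)" using prime_gt_0_nat[OF p] by simp
  have "(\<Sum>r<p. ?z ^ r) = 0" using sum_unit_root_power_mult[of 1] prime_gt_1_nat[OF p] by simp
  hence last: "?z ^ (p - 1) = - (\<Sum>r<p - 1. ?z ^ r)"
    by (subst (asm) pp) (simp add: eq_neg_iff_add_eq_0 add.commute)
  have "(\<Sum>r<p. of_int (N r) * ?z ^ r) =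
      (\<Sum>r<p - 1. of_int (N r) * ?z ^ r) + of_int (N (p - 1)) * ?z ^ (p - 1)"
    by (subst pp) simp
  also have "\<dots> = (\<Sum>r<p - 1. of_int (N r - N (p - 1)) * ?z ^ r)"
    unfolding last by (simp add: sum_distrib_left sum_subtractf algebra_simps)
  finally have S: "(\<Sum>r<p. of_int (N r) * ?z ^ r) = (\<Sum>r<p - 1. of_int (N r - N (p - 1)) * ?z ^ r)" .
  define G :: "int poly" where "G = (\<Sum>r<p - 1. Polynomial.monom (m * (N r - N (p - 1))) r) - [:B:]"
  have G: "map_poly of_int G =
      (\<Sum>r<p - 1. Polynomial.monom (of_int (m * (N r - N (p - 1)))) r) - [:of_int B :: complex:]"
    unfolding G_def
    by (intro poly_eqI)
        (simp add: coeff_map_poly coeff_sum coeff_monom coeff_pCons split: nat.splits)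
  have "poly (map_poly of_int G) ?z = 0"
    using eq unfolding G S by (simp add: poly_sum poly_monom sum_distrib_left algebra_simps)
  hence "poly (map_poly of_int (pcompose G [:1, 1:])) (?z - 1) = 0"
    by (simp add: map_poly_of_int_pcompose map_poly_pCons map_poly_of_int_const poly_pcompose)
  moreover have "degree (pcompose G [:1, 1:]) < p - 1"
  proof -
    have "degree G \<le> p - 2" unfolding G_def
      by (intro degree_diff_le degree_sum_le) (auto intro: order.trans[OF degree_monom_le])
    thus ?thesis using prime_ge_2_nat[OF p] by (simp add: degree_pcompose)
  qed
  ultimately have "pcompose G [:1, 1:] = 0"
    using degree_ge_if_poly_unit_root_minus_1_eq_0 by (meson not_le)
  hence "G = 0" by (rule pcompose_eq_0) simp
  hence "Polynomial.coeff G r = 0" by simp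
  moreover have "r < p - 1" using r \<open>r \<noteq> p - 1\<close> by simp
  hence "Polynomial.coeff G r = m * (N r - N (p - 1))"
    using r unfolding G_def by (simp add: coeff_sum coeff_monom coeff_pCons split: nat.splits)
  ultimately show ?thesis using \<open>m \<noteq> 0\<close> by simp
qed simp

lemma sum_unit_root_power_galois_invariant:
  fixes t :: "'x \<Rightarrow> nat" and X :: "'x set" and m B :: int
  assumes "finite X" and "m \<noteq> 0"
    and eq: "of_int m * (\<Sum>x\<in>X. unit_root p ^ t x) = (of_int B :: complex)"
    and j: "\<not> p dvd j"
  shows "(\<Sum>x\<in>X. unit_root p ^ (j * t x)) = (\<Sum>x\<in>X. unit_root p ^ t x)"
proof -
  let ?z = "unit_root p"
  define N where "N r = int (card {x\<in>X. t x mod p = r})" for r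
  have grouped: "(\<Sum>x\<in>X. ?z ^ (k * t x)) = (\<Sum>r<p. of_int (N r) * ?z ^ (k * r))" for k
  proof -
    have "(\<Sum>x\<in>X. ?z ^ (k * t x)) = (\<Sum>x\<in>X. ?z ^ (k * (t x mod p)))"
      using prime_gt_0_nat[OF p]
      by (intro sum.cong refl unit_root_power_cong) (auto simp: cong_def mod_mult_right_eq)
    also have "\<dots> = (\<Sum>r<p. \<Sum>x\<in>{x\<in>X. t x mod p = r}. ?z ^ (k * r))"
      by (subst sum.group[symmetric, of X "{..<p}" "\<lambda>x. t x mod p"])
        (use \<open>finite X\<close> prime_gt_0_nat[OF p] in \<open>auto intro!: sum.cong\<close>)
    finally show ?thesis by (simp add: N_def)
  qed
  have N: "N r = N (p - 1)" if "1 \<le> r" "r < p" for r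
    using int_combination_unit_root_eq_int[OF \<open>m \<noteq> 0\<close> _ that] eq grouped[of 1] by simp
  have sum_eq: "(\<Sum>x\<in>X. ?z ^ (k * t x)) = of_int (N 0) - of_int (N (p - 1))" if "\<not> p dvd k" for k
  proof -
    have pp: "{..<p} = insert 0 {1..<p}" using prime_gt_0_nat[OF p] by auto
    have "(\<Sum>r<p. ?z ^ (k * r)) = 0" by (rule sum_unit_root_power_mult[OF that])
    hence "(\<Sum>r\<in>{1..<p}. ?z ^ (k * r)) = -1" by (simp add: pp add_eq_0_iff)
    thus ?thesis by (simp add: grouped pp N sum_distrib_left[symmetric])
  qed
  show ?thesis using sum_eq[OF j] sum_eq[of 1] prime_gt_1_nat[OF p] by simp
qed

end

section \<open>Three-valued Weil spectra\<close>

lemma moment_equations_solve: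
  fixes A :: complex and k :: int and N q R :: nat
  assumes "q > 0" and "R > 0"
    and E1: "of_int k * A = of_nat q"
    and E2: "of_nat N * (A * cnj A) = of_nat q ^ 2"
    and E3: "of_int k * A ^ 3 = of_nat q ^ 2 * of_nat R"
  shows "cmod A = real q / \<bar>real_of_int k\<bar>" and "cmod A ^ 2 = real R * real q"
    and "real_of_int k ^ 2 * real R = real q" and "int N = k ^ 2"
proof -
  have "k \<noteq> 0" using E1 \<open>q > 0\<close> by auto
  define a where "a = real q / real_of_int k"
  have A: "A = complex_of_real a" using E1 \<open>k \<noteq> 0\<close> by (simp add: a_def field_simps)
  have "of_nat q * A ^ 2 = of_nat q ^ 2 * of_nat R"
    using E1 E3 by (metis power2_eq_square power3_eq_cube mult.assoc)
  hence "A ^ 2 = of_nat R * of_nat q" using \<open>q > 0\<close> by (simp add: power2_eq_square)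
  hence a2: "a ^ 2 = real R * real q"
    unfolding A by (metis of_real_eq_iff of_real_mult of_real_of_nat_eq of_real_power)
  thus "cmod A ^ 2 = real R * real q" by (simp add: A)
  show "cmod A = real q / \<bar>real_of_int k\<bar>" unfolding A norm_of_real a_def by (simp add: abs_divide)
  have "a * real_of_int k = real q" using \<open>k \<noteq> 0\<close> by (simp add: a_def)
  hence "a ^ 2 * real_of_int k ^ 2 = real q ^ 2" by (metis power_mult_distrib)
  hence "real q * (real_of_int k ^ 2 * real R) = real q * real q"
    by (simp only: a2) (simp add: power2_eq_square mult_ac)
  thus kR: "real_of_int k ^ 2 * real R = real q" using \<open>q > 0\<close> by simp
  have "complex_of_real (real N * (a * a)) = complex_of_real (real q ^ 2)"
    using E2 by (simp add: A)
  hence "real N * (real R * real q) = real q ^ 2" using a2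
    by (simp only: of_real_eq_iff power2_eq_square)
  hence "real N * real R = real_of_int k ^ 2 * real R"
    using kR \<open>q > 0\<close> by (simp add: power2_eq_square)
  hence "real_of_int (int N) = real_of_int (k ^ 2)" using \<open>R > 0\<close> by simp
  thus "int N = k ^ 2" by (simp only: of_int_eq_iff)
qed

lemma prime_power_eq_square_mult:
  fixes p n K R :: nat
  assumes "prime p" and "K ^ 2 * R = p ^ n" and "K \<ge> 2" and "R \<ge> 2"
  shows "\<exists>i. K = p ^ i \<and> 0 < i \<and> 2 * i < n"
proof -
  have "K dvd p ^ n" using assms(2) by (metis dvd_mult2 dvd_triv_left power2_eq_square)
  then obtain i where "K = p ^ i" using divides_primepow_nat[OF assms(1)] by blast
  moreover have "i > 0" using \<open>K = p ^ i\<close> \<open>K \<ge> 2\<close> by (cases i) auto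
  moreover have "p ^ (2 * i) < p ^ n"
  proof -
    have "p ^ (2 * i) * 1 < p ^ (2 * i) * R" using \<open>R \<ge> 2\<close> prime_gt_0_nat[OF assms(1)] by simp
    moreover have "p ^ n = p ^ (2 * i) * R"
      using assms(2) \<open>K = p ^ i\<close> by (metis power_mult mult.commute)
    ultimately show ?thesis by simp
  qed
  hence "2 * i < n" using prime_gt_1_nat[OF assms(1)] by (simp add: power_strict_increasing_iff)
  ultimately show ?thesis by blast
qed

lemma cong_1_mod_pred_if_power_cong_self:
  assumes p: "prime p" and "d > 0" and cong: "\<And>j. \<not> p dvd j \<Longrightarrow> [j ^ d = j] (mod p)"
  shows "[d = 1] (mod p - 1)"
proof -
  have "ord p j dvd d - 1" if "j \<in> totatives p" for j
  proof -
    have "coprime j p" using that by (simp add: totatives_def)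
    have "\<not> p dvd j"
    proof
      assume "p dvd j"
      hence "is_unit p" by (rule coprime_common_divisor[OF \<open>coprime j p\<close>]) simp
      thus False using p not_prime_unit by blast
    qed
    have "[j * j ^ (d - 1) = j * 1] (mod p)" using cong[OF \<open>\<not> p dvd j\<close>] \<open>d > 0\<close>
      by (simp flip: power_Suc)
    hence "[j ^ (d - 1) = 1] (mod p)" by (simp only: cong_mult_lcancel_nat[OF \<open>coprime j p\<close>])
    thus ?thesis by (simp add: ord_divides')
  qed
  hence "Carmichael p dvd d - 1" unfolding Carmichael_def by (simp add: Lcm_dvd_iff)
  thus ?thesis using Carmichael_prime[OF p] \<open>d > 0\<close> by (simp add: cong_altdef_nat)
qed

lemma sum_three_valued:
  fixes f :: "'b \<Rightarrow> complex" and g :: "complex \<Rightarrow> complex"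
  assumes "finite U" and "f ` U \<subseteq> {0, A, -A}" and "A \<noteq> 0" and "g 0 = 0"
  shows "(\<Sum>a\<in>U. g (f a)) =
    of_nat (card {a\<in>U. f a = A}) * g A + of_nat (card {a\<in>U. f a = -A}) * g (-A)"
proof -
  have "(\<Sum>a\<in>U. g (f a)) = (\<Sum>y\<in>{0, A, -A}. \<Sum>a\<in>{a\<in>U. f a = y}. g (f a))"
    by (rule sum.group[symmetric]) (use assms(1,2) in auto)
  also have "\<dots> = (\<Sum>y\<in>{0, A, -A}. of_nat (card {a\<in>U. f a = y}) * g y)"
    by (intro sum.cong refl) simp
  also have "\<dots> = of_nat (card {a\<in>U. f a = A}) * g A + of_nat (card {a\<in>U. f a = -A}) * g (-A)"
    using assms(3,4) by simp
  finally show ?thesis .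
qed

lemma three_valued_weil_spectrum_norm:
  fixes A :: complex and p n Np Nm R :: nat
  assumes p: "prime p" and "n > 0" and "Np \<ge> 1" and "Nm \<ge> 1" and "R \<ge> 2"
    and E1: "(of_nat Np - of_nat Nm) * A = of_nat (p ^ n)"
    and E2: "(of_nat Np + of_nat Nm) * (A * cnj A) = of_nat (p ^ n) ^ 2"
    and E3: "(of_nat Np - of_nat Nm) * A ^ 3 = of_nat (p ^ n) ^ 2 * of_nat R"
  shows "(\<exists>k>0. cmod A = real p ^ k) \<and> sqrt (real (p ^ n)) < sqrt (real R * real (p ^ n))
    \<and> sqrt (real R * real (p ^ n)) = cmod A \<and> cmod A < real (p ^ n)"
proof -
  let ?q = "p ^ n" and ?k = "int Np - int Nm"
  have q: "?q > 0" using prime_gt_0_nat[OF p] by simp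
  note sol = moment_equations_solve[of ?q R ?k A "Np + Nm"]
  have eqs: "cmod A = real ?q / \<bar>real_of_int ?k\<bar>" "cmod A ^ 2 = real R * real ?q"
    "real_of_int ?k ^ 2 * real R = real ?q" "int (Np + Nm) = ?k ^ 2"
    using sol q assms(5) E1 E2 E3 by simp_all
  define K where "K = nat \<bar>?k\<bar>"
  have "int K = \<bar>?k\<bar>" unfolding K_def by simp
  hence K: "\<bar>real_of_int ?k\<bar> = real K" by (metis of_int_abs of_int_of_nat_eq)
  have "int (K ^ 2) = ?k ^ 2" using \<open>int K = \<bar>?k\<bar>\<close> by simp
  hence KN: "K ^ 2 = Np + Nm" using eqs(4) by (simp only: of_nat_eq_iff)
  have "real (K ^ 2 * R) = real_of_int (?k ^ 2) * real R"
    using \<open>int (K ^ 2) = ?k ^ 2\<close> by (metis of_int_of_nat_eq of_nat_mult)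
  hence "K ^ 2 * R = ?q" using eqs(3) by (simp only: of_int_power of_nat_eq_iff)
  moreover have "K \<ge> 2"
  proof (rule ccontr)
    assume "\<not> K \<ge> 2"
    hence "K \<le> 1" by simp
    hence "K ^ 2 \<le> 1" using power_le_one[of K 2] by simp
    thus False using KN assms(3,4) by simp
  qed
  ultimately obtain i where i: "K = p ^ i" "0 < i" "2 * i < n"
    using prime_power_eq_square_mult[OF p] assms(5) by blast
  have "cmod A = real p ^ (n - i)"
    using eqs(1)[unfolded K] i prime_gt_0_nat[OF p] by (simp add: power_diff)
  moreover have "sqrt (real R * real ?q) = cmod A" using eqs(2) by (simp add: real_sqrt_unique)
  moreover have "cmod A < real ?q" using eqs(1)[unfolded K] \<open>K \<ge> 2\<close> q by (simp add: divide_less_eq)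
  moreover have "sqrt (real ?q) < sqrt (real R * real ?q)" using assms(5) q by simp
  ultimately show ?thesis using i(3) by (intro conjI exI[of _ "n - i"]) simp_all
qed

lemma scaled_weil_sum_eq_weil_sum_if_rational:
  fixes a :: "'a::{finite,field}" and m B :: int
  assumes "m \<noteq> 0" and "of_int m * weil_sum d a = of_int B" and "\<not> CHAR('a) dvd j"
  shows "scaled_weil_sum d (of_nat j) a = weil_sum d a"
proof -
  define t where "t x = trace_nat (x ^ d + a * x)" for x :: 'a
  have W: "weil_sum d a = (\<Sum>x\<in>UNIV. unit_root CHAR('a) ^ t x)"
    by (simp add: weil_sum_def add_char_eq_unit_root_power t_def)
  have "scaled_weil_sum d (of_nat j) a = (\<Sum>x\<in>UNIV. unit_root CHAR('a) ^ (j * t x))"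
    unfolding scaled_weil_sum_def add_char_of_nat_mult
    by (simp add: add_char_eq_unit_root_power t_def mult.commute[of j] flip: power_mult)
  also have "\<dots> = weil_sum d a" unfolding W
    by (rule sum_unit_root_power_galois_invariant[OF prime_CHAR_finite_field _ assms(1) _ assms(3)])
      (use assms(2) W in simp_all)
  finally show ?thesis .
qed

lemma power_cong_self_if_scaled_weil_sum_eq:
  assumes "d > 0" and "coprime d (CARD('a::{finite,field}) - 1)"
    and "\<And>a::'a. scaled_weil_sum d (of_nat j) a = weil_sum d a"
  shows "[j ^ d = j] (mod CHAR('a))"
proof -
  have "(\<Sum>a\<in>UNIV. weil_sum d (a::'a) * cnj (scaled_weil_sum d (of_nat j) a)) = of_nat CARD('a) ^ 2"
    using sum_weil_sum_mult_cnj[OF assms(1,2)] assms(3) by simp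
  hence "(of_nat j :: 'a) ^ d = of_nat j"
    using sum_weil_sum_mult_cnj_scaled[OF assms(1,2), of "of_nat j"] by (simp split: if_splits)
  hence "(of_nat (j ^ d) :: 'a) = of_nat j" by simp
  thus ?thesis by (simp only: of_nat_eq_iff_cong_CHAR)
qed

lemma three_valued_weil_sum_moments:
  fixes A :: complex
  assumes d: "d > 0" "coprime d (CARD('a::{finite,field}) - 1)" and "(-1::'a) ^ d = -1"
    and img: "(weil_sum d :: 'a \<Rightarrow> complex) ` (UNIV - {0}) = {0, A, -A}" and "A \<noteq> 0"
  defines "Np \<equiv> card {a \<in> UNIV - {0::'a}. weil_sum d a = A}"
    and "Nm \<equiv> card {a \<in> UNIV - {0::'a}. weil_sum d a = -A}"
  shows "(of_nat Np - of_nat Nm) * A = of_nat CARD('a)"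
    and "(of_nat Np + of_nat Nm) * (A * cnj A) = of_nat CARD('a) ^ 2"
    and "(of_nat Np - of_nat Nm) * A ^ 3 =
      of_nat CARD('a) ^ 2 * of_nat (card {t::'a. (t + 1) ^ d - t ^ d - 1 = 0})"
    and "Np \<ge> 1" and "Nm \<ge> 1"
proof -
  have sum_split: "(\<Sum>a\<in>UNIV. g (weil_sum d (a::'a))) =
      of_nat Np * g A + of_nat Nm * g (-A)" if "g 0 = 0" for g :: "complex \<Rightarrow> complex"
    using sum.remove[of UNIV "0::'a" "\<lambda>a. g (weil_sum d a)"] weil_sum_0[OF d] that
      sum_three_valued[of "UNIV - {0::'a}" "weil_sum d" A g] img \<open>A \<noteq> 0\<close>
    by (simp add: Np_def Nm_def)
  show "(of_nat Np - of_nat Nm) * A = of_nat CARD('a)"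
    using sum_split[of "\<lambda>w. w"] sum_weil_sum[OF d(1), where 'a='a] by (simp add: algebra_simps)
  show "(of_nat Np + of_nat Nm) * (A * cnj A) = of_nat CARD('a) ^ 2"
    using sum_split[of "\<lambda>w. w * cnj w"] sum_weil_sum_mult_cnj[OF d] by (simp add: algebra_simps)
  show "(of_nat Np - of_nat Nm) * A ^ 3 =
      of_nat CARD('a) ^ 2 * of_nat (card {t::'a. (t + 1) ^ d - t ^ d - 1 = 0})"
    using sum_split[of "\<lambda>w. w ^ 3"] sum_weil_sum_power3_eq[OF d assms(3)]
    by (simp add: algebra_simps power3_eq_cube)
  have "A \<in> weil_sum d ` (UNIV - {0::'a})" "-A \<in> weil_sum d ` (UNIV - {0::'a})" using img by auto
  thus "Np \<ge> 1" "Nm \<ge> 1" unfolding Np_def Nm_def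
    by (auto simp: Suc_le_eq card_gt_0_iff)
qed

lemma three_valued_weil_spectrum_cong:
  fixes A :: complex and Np Nm :: nat
  assumes d: "d > 0" "coprime d (CARD('a::{finite,field}) - 1)"
    and vals: "\<And>a::'a. weil_sum d a \<in> {0, A, -A}"
    and E1: "(of_nat Np - of_nat Nm) * A = of_nat CARD('a)"
  shows "[d = 1] (mod (CHAR('a) - 1))"
proof (rule cong_1_mod_pred_if_power_cong_self[OF prime_CHAR_finite_field d(1)])
  define k where "k = int Np - int Nm"
  have kA: "of_int k * A = of_nat CARD('a)" using E1 by (simp add: k_def)
  hence "k \<noteq> 0" by auto
  have rational: "\<exists>B. of_int k * weil_sum d a = of_int B" for a :: 'a
    using vals[of a] kA
    by (auto intro: exI[of _ 0] exI[of _ "int CARD('a)"] exI[of _ "- int CARD('a)"])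
  fix j assume "\<not> CHAR('a) dvd j"
  hence "scaled_weil_sum d (of_nat j) a = weil_sum d a" for a :: 'a
    using rational[of a] scaled_weil_sum_eq_weil_sum_if_rational[OF \<open>k \<noteq> 0\<close>] by blast
  thus "[j ^ d = j] (mod CHAR('a))" by (rule power_cong_self_if_scaled_weil_sum_eq[OF d])
qed

theorem proposition2p4:
  fixes d :: nat and A :: complex
  assumes "coprime d (CARD('a::{finite,field}) - 1)"
    and "(weil_sum d :: 'a \<Rightarrow> complex) ` (UNIV - {0}) = {0, A, -A}"
    and "card {0, A, -A} = 3"
  shows "[d = 1] (mod (CHAR('a) - 1))
         \<and> (\<exists>k::nat. k > 0 \<and> cmod A = real CHAR('a) ^ k)
         \<and> sqrt (real CARD('a)) < sqrt (real (card {x::'a. (x + 1) ^ d - x ^ d - 1 = 0}) * real CARD('a))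
         \<and> sqrt (real (card {x::'a. (x + 1) ^ d - x ^ d - 1 = 0}) * real CARD('a)) = cmod A
         \<and> cmod A < real CARD('a)"
proof -
  have "A \<noteq> 0" using assms(3) by auto
  have "d > 0"
  proof (rule ccontr)
    assume "\<not> d > 0"
    hence "card (UNIV - {0::'a}) = 1" using assms(1) by (simp add: card_Diff_subset)
    hence "card (weil_sum d ` (UNIV - {0::'a})) \<le> 1" using card_image_le[of "UNIV - {0::'a}"]
      by simp
    thus False using assms(2,3) by simp
  qed
  note hneg = uminus_one_power_coprime[OF assms(1)]
  note moments = three_valued_weil_sum_moments[OF \<open>d > 0\<close> assms(1) hneg assms(2) \<open>A \<noteq> 0\<close>]
  have "weil_sum d a \<in> {0, A, -A}" for a :: 'a
    using assms(2) weil_sum_0[OF \<open>d > 0\<close> assms(1)] by (cases "a = 0") auto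
  hence "[d = 1] (mod (CHAR('a) - 1))"
    by (rule three_valued_weil_spectrum_cong[OF \<open>d > 0\<close> assms(1) _ moments(1)])
  moreover note three_valued_weil_spectrum_norm[OF prime_CHAR_finite_field field_ext_degree_pos
      moments(4,5) card_roots_ge_2[OF \<open>d > 0\<close> hneg]
      moments(1-3)[unfolded CARD_eq_CHAR_power_field_ext_degree]]
  ultimately show ?thesis unfolding CARD_eq_CHAR_power_field_ext_degree by blast
qed

end
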